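(* The semigroup $\Lambda_S\cap Q^+$ is generated by the elements $\alpha\in\Lambda_S\cap R^+$ together with the elements $\sigma(\alpha)=\theta(\alpha)+\alpha\in\Lambda_S$ for $\alpha\in R^+$.
   Context: $G$ connected reductive complex algebraic group with conjugation $\theta$ and real form $G_\mathbb R$; $S_\mathbb R\subset T_\mathbb R\subset M_\mathbb R\subset P_\mathbb R$ are a maximal split torus, a maximal torus, a Levi factor of a minimal parabolic $P_\mathbb R$ of $G_\mathbb R$; $S,T,M,P$ their complexifications; $B$ a Borel subgroup with $T\subset B\subset P$. $\Lambda_T=\mathrm{Hom}(\mathbb C^\times,T)$; $R\subset\Lambda_T$ the coroots, $R^+$ the positive coroots w.r.t. $B$; $Q^+$ the semigroup generated by $R^+$. $\theta$ acts on $\Lambda_T$ by $\theta(\lambda)=\theta\circ\lambda\circ c$ with $c$ complex conjugation on $\mathbb C^\times$; $\Lambda_S=\mathrm{Hom}(\mathbb C^\times,S)$ is the fixed sublattice; $\sigma(\lambda)=\theta(\lambda)+\lambda$. *)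

theory Defs
  imports "HOL-Analysis.Analysis"
begin

text \<open>The cocharacter lattice Lambda_T of the (rank n) maximal torus T and the
  character lattice X^*(T) are both modelled as int^n; the perfect pairing
  X^*(T) x Lambda_T -> Z is the standard one.\<close>

definition pair :: "int^'n \<Rightarrow> int^'n \<Rightarrow> int" where
  "pair x y = (\<Sum>i\<in>UNIV. x $ i * y $ i)"

text \<open>Reduced root datum: roots Phi in X^*(T), coroot map cov : Phi -> Lambda_T
  (alpha to alpha-check).  The coroot set is R = cov ` Phi.\<close>

definition root_datum :: "(int^'n) set \<Rightarrow> (int^'n \<Rightarrow> int^'n) \<Rightarrow> bool" where
  "root_datum Phi cov \<longleftrightarrow>
     finite Phi \<and> inj_on cov Phi \<and>
     (\<forall>a\<in>Phi. pair a (cov a) = 2) \<and>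
     (\<forall>a\<in>Phi. \<forall>b\<in>Phi. b - of_int (pair b (cov a)) *s a \<in> Phi) \<and>
     (\<forall>a\<in>Phi. \<forall>b\<in>Phi. cov b - of_int (pair a (cov b)) *s cov a \<in> cov ` Phi) \<and>
     (\<forall>a\<in>Phi. 2 *s a \<notin> Phi)"

text \<open>Positive coroots with respect to a Borel subgroup B containing T:
  the coroots of the roots that are positive on a regular cocharacter.\<close>

definition positive_coroots :: "(int^'n) set \<Rightarrow> (int^'n \<Rightarrow> int^'n) \<Rightarrow> (int^'n) set \<Rightarrow> bool" where
  "positive_coroots Phi cov Rp \<longleftrightarrow>
     (\<exists>l. (\<forall>a\<in>Phi. pair a l \<noteq> 0) \<and> Rp = cov ` {a\<in>Phi. pair a l > 0})"

definition lattice_involution :: "(int^'n \<Rightarrow> int^'n) \<Rightarrow> bool" where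
  "lattice_involution th \<longleftrightarrow> (\<forall>x y. th (x + y) = th x + th y) \<and> (\<forall>x. th (th x) = x)"

inductive_set nat_span :: "'a::comm_monoid_add set \<Rightarrow> 'a set" for A where
  zero: "0 \<in> nat_span A"
| add: "a \<in> A \<Longrightarrow> x \<in> nat_span A \<Longrightarrow> a + x \<in> nat_span A"

end

theory Submission
  imports Defs
begin

text \<open>
  The inclusion from right to left holds because theta sends every positive coroot either to
  its negative or to a positive coroot.  For the converse one descends on the height of a
  theta-fixed lambda in Q+, subtracting a nonzero generator without leaving Q+.

  Let r be a summand of lambda of maximal height.  Maximality gives B(r, lambda - r) >= 0, so
  B(lambda, r) > 0; as lambda is theta-fixed this excludes theta r = -r, hence theta r is
  positive.  Since B(r, theta r) < B(r, r), some summand e of lambda - r pairs positively with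
  theta r, and the resulting coroot e - theta r shows that sigma(r) or sigma(e) can be
  subtracted.  In the one case where this leaves an element known to lie in Q+ only after adding
  a theta-negated positive coroot, a second descent over the span of those coroots finishes.
\<close>

lemma pair_add_left: "pair (x + y) z = pair x z + pair y z"
  by (simp add: pair_def sum.distrib algebra_simps)

lemma pair_add_right: "pair z (x + y) = pair z x + pair z y"
  by (simp add: pair_def sum.distrib algebra_simps)

lemma pair_diff_left: "pair (x - y) z = pair x z - pair y z"
  by (simp add: pair_def sum_subtractf algebra_simps)

lemma pair_diff_right: "pair z (x - y) = pair z x - pair z y"
  by (simp add: pair_def sum_subtractf algebra_simps)

lemma pair_uminus_left: "pair (- x) z = - pair x z"
  by (simp add: pair_def sum_negf)

lemma pair_uminus_right: "pair z (- x) = - pair z x"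
  by (simp add: pair_def sum_negf)

lemma pair_scale_left: "pair (c *s x) z = c * pair x z"
  by (simp add: pair_def sum_distrib_left algebra_simps)

lemma pair_scale_right: "pair z (c *s x) = c * pair z x"
  by (simp add: pair_def sum_distrib_left algebra_simps)

lemmas pair_linear = pair_add_left pair_add_right pair_diff_left pair_diff_right
  pair_uminus_left pair_uminus_right pair_scale_left pair_scale_right

lemma nat_span_add: "x \<in> nat_span A \<Longrightarrow> y \<in> nat_span A \<Longrightarrow> x + y \<in> nat_span A"
  by (induction x rule: nat_span.induct) (auto simp: add.assoc intro: nat_span.add)

lemma nat_span_base: "a \<in> A \<Longrightarrow> a \<in> nat_span A"
  using nat_span.add[OF _ nat_span.zero] by fastforce

lemma nat_span_summand:
  fixes f :: "'a::ab_group_add \<Rightarrow> int"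
  assumes "x \<in> nat_span A" and f_add: "\<And>u v. f (u + v) = f u + f v" and "0 < f x"
  shows "\<exists>e\<in>A. 0 < f e \<and> x - e \<in> nat_span A"
  using assms(1,3)
proof (induction x rule: nat_span.induct)
  case zero
  then show ?case using f_add[of 0 0] by simp
next
  case (add a x)
  show ?case
  proof (cases "0 < f a")
    case True
    then show ?thesis using add by auto
  next
    case False
    then obtain e where "e \<in> A" "0 < f e" "x - e \<in> nat_span A"
      using add f_add by fastforce
    moreover have "a + x - e = a + (x - e)" by simp
    ultimately show ?thesis using add.hyps(1) by (metis nat_span.add)
  qed
qed

lemma nat_span_pos:
  fixes f :: "'a::ab_group_add \<Rightarrow> int"
  assumes "x \<in> nat_span A" and "\<And>u v. f (u + v) = f u + f v" and "\<And>a. a \<in> A \<Longrightarrow> 0 < f a"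
  shows "x = 0 \<or> 0 < f x"
  using assms(1)
proof (induction x rule: nat_span.induct)
  case zero
  then show ?case by simp
next
  case (add a x)
  then show ?case using assms(2,3)[of a] by (cases "x = 0") auto
qed

locale coroot_datum =
  fixes Phi :: "(int^'n) set" and cov :: "int^'n \<Rightarrow> int^'n"
  assumes finite_Phi: "finite Phi"
    and inj_cov: "inj_on cov Phi"
    and pair_coroot: "\<And>a. a \<in> Phi \<Longrightarrow> pair a (cov a) = 2"
    and reflection_root: "\<And>a b. a \<in> Phi \<Longrightarrow> b \<in> Phi \<Longrightarrow> b - pair b (cov a) *s a \<in> Phi"
    and reflection_coroot:
      "\<And>a b. a \<in> Phi \<Longrightarrow> b \<in> Phi \<Longrightarrow> cov b - pair a (cov b) *s cov a \<in> cov ` Phi"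
begin

abbreviation coroots :: "(int^'n) set" where
  "coroots \<equiv> cov ` Phi"

definition form :: "int^'n \<Rightarrow> int^'n \<Rightarrow> int" where
  "form x y = (\<Sum>b\<in>Phi. pair b x * pair b y)"

lemma form_commute: "form x y = form y x"
  by (simp add: form_def mult.commute)

lemma form_add_left: "form (x + y) z = form x z + form y z"
  by (simp add: form_def pair_linear sum.distrib algebra_simps)

lemma form_add_right: "form z (x + y) = form z x + form z y"
  by (simp add: form_def pair_linear sum.distrib algebra_simps)

lemma form_diff_left: "form (x - y) z = form x z - form y z"
  by (simp add: form_def pair_linear sum_subtractf algebra_simps)

lemma form_diff_right: "form z (x - y) = form z x - form z y"
  by (simp add: form_def pair_linear sum_subtractf algebra_simps)

lemma form_uminus_left: "form (- x) z = - form x z"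
  by (simp add: form_def pair_linear sum_negf)

lemma form_uminus_right: "form z (- x) = - form z x"
  by (simp add: form_def pair_linear sum_negf)

lemma form_scale_left: "form (c *s x) z = c * form x z"
  by (simp add: form_def pair_linear sum_distrib_left algebra_simps)

lemma form_scale_right: "form z (c *s x) = c * form z x"
  by (simp add: form_def pair_linear sum_distrib_left algebra_simps)

lemmas form_linear = form_add_left form_add_right form_diff_left form_diff_right
  form_uminus_left form_uminus_right form_scale_left form_scale_right

lemma form_nonneg: "0 \<le> form x x"
  unfolding form_def by (rule sum_nonneg) simp

lemma form_self_eq_0_iff: "form x x = 0 \<longleftrightarrow> (\<forall>b\<in>Phi. pair b x = 0)"
  unfolding form_def by (subst sum_nonneg_eq_0_iff) (auto simp: finite_Phi)

lemma form_Cauchy_Schwarz: "(form x y)^2 \<le> form x x * form y y"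
proof (cases "form y y = 0")
  case True
  then have "form x y = 0"
    using form_self_eq_0_iff by (simp add: form_def)
  then show ?thesis using form_nonneg[of x] True by simp
next
  case False
  define s t where "s = form x y" and "t = form y y"
  have "0 < t" using False form_nonneg[of y] t_def by simp
  have "0 \<le> (\<Sum>b\<in>Phi. (t * pair b x - s * pair b y)^2)"
    by (rule sum_nonneg) simp
  also have "\<dots> = t^2 * form x x - 2 * s * t * form x y + s^2 * form y y"
    unfolding form_def
    by (simp add: power2_eq_square algebra_simps sum.distrib sum_subtractf sum_distrib_left)
  also have "\<dots> = t * (t * form x x - s^2)"
    unfolding s_def t_def by (simp add: power2_eq_square algebra_simps)
  finally have "s^2 \<le> t * form x x"
    using \<open>0 < t\<close> by (simp add: zero_le_mult_iff)
  then show ?thesis unfolding s_def t_def by (simp add: mult.commute)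
qed

lemma coroot_reflect_self: "a \<in> Phi \<Longrightarrow> cov a - pair a (cov a) *s cov a = - cov a"
  by (simp add: pair_coroot vec_eq_iff)

lemma uminus_coroot: "x \<in> coroots \<Longrightarrow> - x \<in> coroots"
  using reflection_coroot coroot_reflect_self by (metis imageE)

lemma form_reflection:
  assumes a: "a \<in> Phi"
  shows "form (y - pair a y *s cov a) (z - pair a z *s cov a) = form y z"
proof -
  define s where "s b = b - pair b (cov a) *s a" for b
  have s_s: "s (s b) = b" for b
    by (simp add: s_def pair_linear pair_coroot[OF a] vec_eq_iff algebra_simps)
  then have inj: "inj_on s Phi"
    by (metis inj_onI)
  moreover have "s ` Phi \<subseteq> Phi"
    using reflection_root[OF a] by (auto simp: s_def)
  ultimately have s_Phi: "s ` Phi = Phi"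
    using endo_inj_surj finite_Phi by blast
  have "form (y - pair a y *s cov a) (z - pair a z *s cov a)
      = (\<Sum>b\<in>Phi. pair (s b) y * pair (s b) z)"
    unfolding form_def by (rule sum.cong) (simp_all add: s_def pair_linear algebra_simps)
  also have "\<dots> = (\<Sum>b\<in>s ` Phi. pair b y * pair b z)"
    by (simp add: sum.reindex[OF inj])
  finally show ?thesis
    by (simp add: s_Phi form_def)
qed

lemma form_coroot: "a \<in> Phi \<Longrightarrow> 2 * form (cov a) v = pair a v * form (cov a) (cov a)"
  using form_reflection[of a "cov a" v] by (simp add: coroot_reflect_self form_linear)

lemma form_coroot_pos: "a \<in> Phi \<Longrightarrow> 0 < form (cov a) (cov a)"
proof -
  assume a: "a \<in> Phi"
  have "(pair a (cov a))^2 \<le> form (cov a) (cov a)"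
    unfolding form_def power2_eq_square by (rule member_le_sum[OF a _ finite_Phi]) simp
  then show ?thesis using pair_coroot[OF a] by simp
qed

lemma pair_coroot_mult_le_4:
  assumes a: "a \<in> Phi" and b: "b \<in> Phi"
  shows "pair a (cov b) * pair b (cov a) \<le> 4"
proof -
  let ?x = "cov a" and ?y = "cov b"
  have "4 * (form ?x ?y)^2 = (2 * form ?x ?y) * (2 * form ?y ?x)"
    by (simp add: power2_eq_square form_commute)
  also have "\<dots> = (pair a ?y * pair b ?x) * (form ?x ?x * form ?y ?y)"
    by (simp add: form_coroot a b)
  finally have "(pair a ?y * pair b ?x) * (form ?x ?x * form ?y ?y) \<le> 4 * (form ?x ?x * form ?y ?y)"
    using form_Cauchy_Schwarz[of ?x ?y] by simp
  moreover have "0 < form ?x ?x * form ?y ?y"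
    using form_coroot_pos a b by simp
  ultimately show ?thesis
    using mult_le_cancel_right_pos by blast
qed

lemma pair_pos_if_form_pos:
  assumes "a \<in> Phi" and "0 < form (cov a) y"
  shows "0 < pair a y"
proof -
  have "0 < pair a y * form (cov a) (cov a)"
    using form_coroot[of a y] assms by simp
  then show ?thesis
    using form_coroot_pos[OF assms(1)] by (simp add: zero_less_mult_iff)
qed

text \<open>Two distinct roots with equal pairings 2 would make the product of their reflections
  translate a along the line through a - b, producing infinitely many roots.\<close>

lemma roots_eq_if_pairings_2:
  assumes a: "a \<in> Phi" and b: "b \<in> Phi"
    and ab: "pair a (cov b) = 2" and ba: "pair b (cov a) = 2"
  shows "a = b"
proof (rule ccontr)
  assume "a \<noteq> b"
  define d where "d = a - b"
  have da: "pair d (cov a) = 0" and db: "pair d (cov b) = 0"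
    using pair_coroot a b ab ba by (simp_all add: d_def pair_linear)
  have string: "a + (2 * int k) *s d \<in> Phi" for k
  proof (induction k)
    case 0
    then show ?case using a by (simp add: vec_eq_iff)
  next
    case (Suc k)
    define y where "y = a + (2 * int k) *s d"
    have y: "y \<in> Phi" and yb: "pair y (cov b) = 2"
      using Suc ab db by (simp_all add: y_def pair_linear)
    define z where "z = y - 2 *s b"
    have "z \<in> Phi"
      using reflection_root[OF b y] yb by (simp add: z_def)
    then have "z - pair z (cov a) *s a \<in> Phi"
      by (rule reflection_root[OF a])
    moreover have "pair z (cov a) = -2"
      using ba pair_coroot[OF a] da by (simp add: z_def y_def pair_linear)
    then have "z - pair z (cov a) *s a = a + (2 * int (Suc k)) *s d"
      by (simp add: z_def y_def d_def vec_eq_iff algebra_simps)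
    ultimately show ?case
      by (simp only:)
  qed
  have "d \<noteq> 0"
    using \<open>a \<noteq> b\<close> by (simp add: d_def)
  then obtain i where "d $ i \<noteq> 0"
    by (metis vec_eq_iff zero_index)
  then have "inj (\<lambda>k::nat. a + (2 * int k) *s d)"
    by (intro injI) (metis add_left_cancel vector_smult_component mult_cancel_right
        mult_cancel_left of_nat_eq_iff zero_neq_numeral)
  moreover have "range (\<lambda>k::nat. a + (2 * int k) *s d) \<subseteq> Phi"
    using string by auto
  ultimately show False
    using finite_Phi finite_subset finite_imageD infinite_UNIV_nat by metis
qed

lemma pairings_not_both_ge_2:
  assumes a: "a \<in> Phi" and b: "b \<in> Phi" and "a \<noteq> b"
    and u: "2 \<le> pair a (cov b)" and v: "2 \<le> pair b (cov a)"
  shows False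
proof -
  have "pair a (cov b) * 2 \<le> pair a (cov b) * pair b (cov a)"
    and "2 * pair b (cov a) \<le> pair a (cov b) * pair b (cov a)"
    using u v by (simp_all add: mult_left_mono mult_right_mono)
  then have "pair a (cov b) = 2 \<and> pair b (cov a) = 2"
    using pair_coroot_mult_le_4[OF a b] u v by linarith
  then show False
    using roots_eq_if_pairings_2[OF a b] \<open>a \<noteq> b\<close> by blast
qed

lemma coroot_diff_mem:
  assumes "x \<in> coroots" and "y \<in> coroots" and "x \<noteq> y" and "0 < form x y"
  shows "x - y \<in> coroots"
proof -
  obtain a b where a: "a \<in> Phi" "x = cov a" and b: "b \<in> Phi" "y = cov b"
    using assms(1,2) by auto
  have "0 < pair a y" and "0 < pair b x"
    using pair_pos_if_form_pos a b assms(4) form_commute by auto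
  then consider "pair b x = 1" | "pair a y = 1" | "2 \<le> pair a y" "2 \<le> pair b x"
    by linarith
  then show ?thesis
  proof cases
    case 1
    then show ?thesis using reflection_coroot[OF b(1) a(1)] a b by simp
  next
    case 2
    then have "- (x - y) \<in> coroots" using reflection_coroot[OF a(1) b(1)] a b by simp
    then show ?thesis using uminus_coroot[of "- (x - y)"] by simp
  next
    case 3
    then show ?thesis using pairings_not_both_ge_2[OF a(1) b(1)] a b assms(3) by auto
  qed
qed

lemma coroot_add_mem:
  assumes "x \<in> coroots" and "y \<in> coroots" and "x \<noteq> - y" and "form x y < 0"
  shows "x + y \<in> coroots"
  using coroot_diff_mem[OF assms(1) uminus_coroot[OF assms(2)]] assms(3,4)
  by (simp add: form_linear)

lemma form_lt_if_same_length:
  assumes "x \<in> coroots" and "y \<in> coroots" and "x \<noteq> y" and same: "form y y = form x x"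
  shows "form x y < form x x"
proof (rule ccontr)
  assume "\<not> ?thesis"
  then have ge: "2 * form x x \<le> 2 * form x y" by simp
  obtain a b where a: "a \<in> Phi" "x = cov a" and b: "b \<in> Phi" "y = cov b"
    using assms(1,2) by auto
  have pos: "0 < form x x"
    using form_coroot_pos a by simp
  have "2 * form x x \<le> pair a y * form x x"
    using ge form_coroot[OF a(1)] a by simp
  moreover have "2 * form x x \<le> pair b x * form x x"
    using ge form_coroot[OF b(1), of x] b same form_commute by simp
  ultimately have "2 \<le> pair a y" and "2 \<le> pair b x"
    using pos by simp_all
  then show False
    using pairings_not_both_ge_2[OF a(1) b(1)] a b assms(3) by auto
qed

end

locale positive_coroot_datum = coroot_datum Phi cov
  for Phi :: "(int^'n) set" and cov +
  fixes Rp :: "(int^'n) set" and l :: "int^'n"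
  assumes regular: "\<And>a. a \<in> Phi \<Longrightarrow> pair a l \<noteq> 0"
    and Rp_eq: "Rp = cov ` {a \<in> Phi. 0 < pair a l}"
begin

text \<open>Heights are measured with the form so that they are linear on cocharacters;
  by form_coroot the height of the coroot of a has the sign of pair a l.\<close>

definition height :: "int^'n \<Rightarrow> int" where
  "height v = form v l"

lemma height_add: "height (x + y) = height x + height y"
  by (simp add: height_def form_linear)

lemma height_diff: "height (x - y) = height x - height y"
  by (simp add: height_def form_linear)

lemma height_uminus: "height (- x) = - height x"
  by (simp add: height_def form_linear)

lemma height_0: "height 0 = 0"
  by (simp add: height_def form_def pair_def)

lemma Rp_subset_coroots: "Rp \<subseteq> coroots"
  using Rp_eq by auto

lemma finite_Rp: "finite Rp"
  using Rp_eq finite_Phi by simp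

lemma positive_coroot_iff:
  assumes "x \<in> coroots"
  shows "x \<in> Rp \<longleftrightarrow> 0 < height x"
proof -
  obtain a where a: "a \<in> Phi" "x = cov a"
    using assms by auto
  have "0 < height x \<longleftrightarrow> 0 < 2 * form (cov a) l"
    using a by (simp add: height_def)
  also have "\<dots> \<longleftrightarrow> 0 < pair a l * form (cov a) (cov a)"
    by (simp only: form_coroot[OF a(1)])
  also have "\<dots> \<longleftrightarrow> 0 < pair a l"
    using form_coroot_pos[OF a(1)] by (simp add: zero_less_mult_iff)
  also have "\<dots> \<longleftrightarrow> x \<in> Rp"
    using Rp_eq a inj_cov by (auto dest: inj_onD)
  finally show ?thesis ..
qed

lemma height_pos: "x \<in> Rp \<Longrightarrow> 0 < height x"
  using positive_coroot_iff Rp_subset_coroots by blast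

lemma height_coroot_ne_0:
  assumes "x \<in> coroots"
  shows "height x \<noteq> 0"
proof -
  obtain a where a: "a \<in> Phi" "x = cov a"
    using assms by auto
  have "2 * height x = pair a l * form (cov a) (cov a)"
    using form_coroot[OF a(1)] a by (simp add: height_def)
  then show ?thesis
    using regular[OF a(1)] form_coroot_pos[OF a(1)] by auto
qed

lemma coroot_positive_or_negative: "x \<in> coroots \<Longrightarrow> x \<in> Rp \<or> - x \<in> Rp"
  using positive_coroot_iff uminus_coroot height_coroot_ne_0 height_uminus
  by (metis neg_0_less_iff_less linorder_neqE)

lemma positive_add_ne_0: "x \<in> Rp \<Longrightarrow> y \<in> Rp \<Longrightarrow> x + y \<noteq> 0"
  using height_pos[of x] height_pos[of y] height_add[of x y] height_0 by auto

lemma nat_span_height_pos: "x \<in> nat_span Rp \<Longrightarrow> x = 0 \<or> 0 < height x"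
  using nat_span_pos[of x Rp height] height_add height_pos by blast

lemma nat_span_height_nonneg: "x \<in> nat_span Rp \<Longrightarrow> 0 \<le> height x"
  using nat_span_height_pos height_0 by fastforce

lemma nat_span_form_pos:
  assumes "x \<in> nat_span Rp" and "x \<noteq> 0"
  shows "0 < form x x"
proof (rule ccontr)
  assume "\<not> 0 < form x x"
  then have "\<forall>b\<in>Phi. pair b x = 0"
    using form_nonneg[of x] form_self_eq_0_iff by simp
  then have "height x = 0"
    by (simp add: height_def form_def)
  then show False
    using nat_span_height_pos assms by fastforce
qed

end

locale real_form_datum = positive_coroot_datum Phi cov Rp l
  for Phi :: "(int^'n) set" and cov Rp l +
  fixes th thX :: "int^'n \<Rightarrow> int^'n"
  assumes th_add: "\<And>x y. th (x + y) = th x + th y"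
    and th_th: "\<And>x. th (th x) = x"
    and pair_thX: "\<And>a y. pair (thX a) y = pair a (th y)"
    and thX_Phi: "thX ` Phi = Phi"
    and cov_thX: "\<And>a. a \<in> Phi \<Longrightarrow> cov (thX a) = th (cov a)"
    and parabolic: "\<And>x. x \<in> Rp \<Longrightarrow> th x \<noteq> - x \<Longrightarrow> th x \<in> Rp"
begin

lemma th_0: "th 0 = 0"
  using th_add[of 0 0] by simp

lemma th_uminus: "th (- x) = - th x"
  using th_add[of "- x" x] th_0 by (simp add: eq_neg_iff_add_eq_0)

lemma th_diff: "th (x - y) = th x - th y"
  using th_add[of x "- y"] th_uminus[of y] by simp

lemma th_coroot: "x \<in> coroots \<Longrightarrow> th x \<in> coroots"
  using thX_Phi by (force simp flip: cov_thX)

lemma form_th: "form (th x) (th y) = form x y"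
proof -
  have inj: "inj_on thX Phi"
    using eq_card_imp_inj_on[OF finite_Phi, of thX] thX_Phi by simp
  have "form (th x) (th y) = (\<Sum>b\<in>Phi. pair (thX b) x * pair (thX b) y)"
    unfolding form_def by (simp add: pair_thX)
  also have "\<dots> = (\<Sum>b\<in>thX ` Phi. pair b x * pair b y)"
    by (simp add: sum.reindex[OF inj])
  finally show ?thesis
    by (simp add: thX_Phi form_def)
qed

lemma form_fixed_anti: "th u = u \<Longrightarrow> th z = - z \<Longrightarrow> form u z = 0"
  using form_th[of u z] by (simp add: form_linear)

abbreviation anti_Rp :: "(int^'n) set" where
  "anti_Rp \<equiv> {x \<in> Rp. th x = - x}"

abbreviation gens :: "(int^'n) set" where
  "gens \<equiv> {x \<in> Rp. th x = x} \<union> (\<lambda>x. th x + x) ` Rp"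

lemma th_sigma: "th (th x + x) = th x + x"
  by (simp add: th_add th_th add.commute)

lemma th_gens: "g \<in> gens \<Longrightarrow> th g = g"
  using th_sigma by auto

lemma gens_subset_nat_span: "gens \<subseteq> nat_span Rp"
proof
  fix g
  assume "g \<in> gens"
  then consider "g \<in> Rp" | x where "x \<in> Rp" "g = th x + x"
    by auto
  then show "g \<in> nat_span Rp"
  proof cases
    case 1
    then show ?thesis by (rule nat_span_base)
  next
    case 2
    show ?thesis
    proof (cases "th x = - x")
      case True
      then show ?thesis using 2 nat_span.zero by simp
    next
      case False
      then have "th x \<in> Rp"
        using parabolic 2(1) by blast
      then show ?thesis
        unfolding 2(2) using nat_span_add nat_span_base 2(1) by blast
    qed
  qed
qed

lemma nat_span_gens_subset: "x \<in> nat_span gens \<Longrightarrow> th x = x \<and> x \<in> nat_span Rp"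
proof (induction x rule: nat_span.induct)
  case zero
  then show ?case using th_0 nat_span.zero by simp
next
  case (add g x)
  have "th g = g"
    using th_gens[OF add.hyps(1)] .
  moreover have "g \<in> nat_span Rp"
    using gens_subset_nat_span add.hyps(1) by blast
  ultimately show ?case
    using add.IH th_add[of g x] nat_span_add[of g Rp x] by simp
qed

lemma nat_span_anti: "z \<in> nat_span anti_Rp \<Longrightarrow> th z = - z \<and> z \<in> nat_span Rp"
proof (induction z rule: nat_span.induct)
  case zero
  then show ?case using th_0 nat_span.zero by simp
next
  case (add d z)
  then have "th d = - d" and "d \<in> nat_span Rp"
    using nat_span_base[of d Rp] by auto
  then show ?case
    using add.IH th_add[of d z] nat_span_add[of d Rp z] by simp
qed

lemma th_eq_uminus_if_anti_diff_pos:
  assumes d: "d \<in> anti_Rp" and e: "e \<in> Rp" and de: "d - e \<in> Rp"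
  shows "th e = - e"
proof (rule ccontr)
  assume ne: "th e \<noteq> - e"
  then have "height (th (d - e)) < 0"
    using parabolic[OF e ne] d height_pos[of d] height_pos[of "th e"]
    by (simp add: th_diff height_diff height_uminus)
  then have "th (d - e) = - (d - e)"
    using parabolic[OF de] height_pos by force
  then have "th e = - e"
    using d by (simp add: th_diff minus_equation_iff)
  then show False
    using ne by contradiction
qed

lemma anti_descent_step:
  assumes z: "z \<in> nat_span anti_Rp" "z \<noteq> 0"
    and u: "th u = u" and uz: "u + z \<in> nat_span Rp"
  shows "\<exists>z'\<in>nat_span anti_Rp. height z' < height z \<and> u + z' \<in> nat_span Rp"
proof -
  have "th z = - z" and "z \<in> nat_span Rp"
    using nat_span_anti[OF z(1)] by auto
  then have "0 < form (u + z) z"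
    using nat_span_form_pos[of z] z(2) form_fixed_anti[OF u] by (simp add: form_add_left)
  then obtain e where e: "e \<in> Rp" "0 < form e z" "u + z - e \<in> nat_span Rp"
    using nat_span_summand[OF uz, of "\<lambda>w. form w z"] form_add_left by blast
  then obtain d where d: "d \<in> anti_Rp" "0 < form e d" "z - d \<in> nat_span anti_Rp"
    using nat_span_summand[OF z(1), of "form e"] form_add_right by blast
  have "e - d \<in> coroots" if "e \<noteq> d"
    using coroot_diff_mem[OF _ _ that d(2)] d(1) e(1) Rp_subset_coroots by blast
  then consider "e = d" | "e - d \<in> Rp" | "d - e \<in> Rp"
    using coroot_positive_or_negative[of "e - d"] by auto
  then show ?thesis
  proof cases
    case 1
    then have "u + (z - d) \<in> nat_span Rp"
      using e(3) by (simp add: add_diff_eq)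
    moreover have "height (z - d) < height z"
      using height_pos d(1) by (simp add: height_diff)
    ultimately show ?thesis
      using d(3) by blast
  next
    case 2
    have "u + (z - d) = (u + z - e) + (e - d)"
      by simp
    also have "\<dots> \<in> nat_span Rp"
      by (rule nat_span_add[OF e(3) nat_span_base[OF 2]])
    finally have "u + (z - d) \<in> nat_span Rp" .
    moreover have "height (z - d) < height z"
      using height_pos d(1) by (simp add: height_diff)
    ultimately show ?thesis
      using d(3) by blast
  next
    case 3
    then have "th e = - e"
      using th_eq_uminus_if_anti_diff_pos d(1) e(1) by blast
    then have "d - e \<in> anti_Rp"
      using 3 d(1) by (simp add: th_diff)
    then have "(z - d) + (d - e) \<in> nat_span anti_Rp"
      by (rule nat_span_add[OF d(3) nat_span_base])
    then have "z - e \<in> nat_span anti_Rp"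
      by simp
    moreover have "u + (z - e) \<in> nat_span Rp"
      using e(3) by (simp add: add_diff_eq)
    moreover have "height (z - e) < height z"
      using height_pos e(1) by (simp add: height_diff)
    ultimately show ?thesis
      by blast
  qed
qed

lemma mem_nat_span_if_add_anti:
  "z \<in> nat_span anti_Rp \<Longrightarrow> th u = u \<Longrightarrow> u + z \<in> nat_span Rp \<Longrightarrow> u \<in> nat_span Rp"
proof (induction "nat (height z)" arbitrary: z rule: less_induct)
  case less
  show ?case
  proof (cases "z = 0")
    case True
    then show ?thesis using less.prems by simp
  next
    case False
    then obtain z' where z': "z' \<in> nat_span anti_Rp" "height z' < height z" "u + z' \<in> nat_span Rp"
      using anti_descent_step less.prems by blast
    moreover have "0 \<le> height z'"
      using nat_span_anti[OF z'(1)] nat_span_height_nonneg by blast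
    ultimately show ?thesis
      using less.hyps less.prems(2) by force
  qed
qed

lemma fixed_add_th_positive_mem:
  assumes x: "x \<in> nat_span Rp" and d: "d \<in> Rp" and fixed: "th (x + th d) = x + th d"
  shows "x + th d \<in> nat_span Rp"
proof (cases "th d = - d")
  case True
  then show ?thesis
    using mem_nat_span_if_add_anti[OF nat_span_base[of d] fixed] x d by simp
next
  case False
  then show ?thesis
    using nat_span_add[OF x nat_span_base] parabolic[OF d] by blast
qed

definition max_summand :: "int^'n \<Rightarrow> int^'n \<Rightarrow> bool" where
  "max_summand x r \<longleftrightarrow> r \<in> Rp \<and> x - r \<in> nat_span Rp \<and>
     (\<forall>y\<in>Rp. x - y \<in> nat_span Rp \<longrightarrow> height y \<le> height r)"

lemma max_summand_exists:
  assumes "x \<in> nat_span Rp" and "x \<noteq> 0"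
  shows "\<exists>r. max_summand x r"
proof -
  define P where "P = {r \<in> Rp. x - r \<in> nat_span Rp}"
  have "finite P"
    using finite_Rp by (simp add: P_def)
  have "0 < height x"
    using nat_span_height_pos assms by blast
  then have "P \<noteq> {}"
    using nat_span_summand[OF assms(1), of height] height_add by (auto simp: P_def)
  with \<open>finite P\<close> have "Max (height ` P) \<in> height ` P"
    by simp
  then obtain r where "r \<in> P" and r_max: "height r = Max (height ` P)"
    by (metis imageE)
  have "height y \<le> height r" if "y \<in> P" for y
    unfolding r_max using \<open>finite P\<close> that by simp
  then show ?thesis
    using \<open>r \<in> P\<close> unfolding max_summand_def P_def by blast
qed

lemma max_summand_form_nonneg:
  assumes r: "max_summand x r"
  shows "0 \<le> form r (x - r)"
proof (rule ccontr)
  assume "\<not> ?thesis"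
  then have neg: "0 < - form r (x - r)"
    by simp
  have r_Rp: "r \<in> Rp" and xr: "x - r \<in> nat_span Rp"
    using r by (simp_all add: max_summand_def)
  have add: "- form r (u + v) = - form r u + - form r v" for u v
    by (simp add: form_add_right)
  obtain e where e: "e \<in> Rp" "0 < - form r e" "x - r - e \<in> nat_span Rp"
    using nat_span_summand[of "x - r" Rp "\<lambda>v. - form r v", OF xr add neg] by blast
  have "r \<noteq> - e"
    using positive_add_ne_0[OF r_Rp e(1)] by auto
  then have "r + e \<in> coroots"
    using coroot_add_mem[of r e] r_Rp e(1,2) Rp_subset_coroots by force
  moreover have "0 < height (r + e)"
    using height_pos[OF r_Rp] height_pos[OF e(1)] by (simp add: height_add)
  ultimately have "r + e \<in> Rp"
    using positive_coroot_iff by blast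
  moreover have "x - (r + e) \<in> nat_span Rp"
    using e(3) by (simp add: diff_diff_eq)
  ultimately have "height (r + e) \<le> height r"
    using r by (simp add: max_summand_def)
  then show False
    using height_pos[OF e(1)] by (simp add: height_add)
qed

lemma reduction_via_summand:
  assumes fixed: "th x = x" and r: "max_summand x r" and r': "th r \<in> Rp"
    and e: "e \<in> Rp" "x - r - e \<in> nat_span Rp" "0 < form e (th r)"
  shows "\<exists>g\<in>gens. g \<noteq> 0 \<and> x - g \<in> nat_span Rp"
proof -
  have r_Rp: "r \<in> Rp"
    using r by (simp add: max_summand_def)
  have sigma_r: "th r + r \<in> gens" "th r + r \<noteq> 0"
    using r_Rp positive_add_ne_0[OF r' r_Rp] by auto
  have "e - th r \<in> coroots" if "e \<noteq> th r"
    using coroot_diff_mem[OF _ _ that e(3)] e(1) r' Rp_subset_coroots by blast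
  then consider "e = th r" | "e - th r \<in> Rp" | "th r - e \<in> Rp"
    using coroot_positive_or_negative[of "e - th r"] by auto
  then show ?thesis
  proof cases
    case 1
    then have "x - (th r + r) \<in> nat_span Rp"
      using e(2) by (simp add: diff_diff_eq add.commute)
    then show ?thesis
      using sigma_r by blast
  next
    case 2
    have "x - (th r + r) = (x - r - e) + (e - th r)"
      by simp
    also have "\<dots> \<in> nat_span Rp"
      by (rule nat_span_add[OF e(2) nat_span_base[OF 2]])
    finally show ?thesis
      using sigma_r by blast
  next
    case 3
    define d where "d = th r - e"
    have d_Rp: "d \<in> Rp"
      using 3 by (simp add: d_def)
    have th_d: "th d = r - th e"
      by (simp add: d_def th_diff th_th)
    show ?thesis
    proof (cases "th e = - e")
      case True
      then have th_d': "th d = r + e"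
        using th_d by simp
      have "th d \<in> coroots"
        using th_coroot d_Rp Rp_subset_coroots by blast
      moreover have "0 < height (th d)"
        using th_d' height_pos[OF r_Rp] height_pos[OF e(1)] by (simp add: height_add)
      ultimately have "th d \<in> Rp"
        using positive_coroot_iff by blast
      moreover have "x - th d \<in> nat_span Rp"
        using e(2) th_d' by (simp add: diff_diff_eq)
      ultimately have "height (th d) \<le> height r"
        using r by (simp add: max_summand_def)
      then show ?thesis
        using th_d' height_pos[OF e(1)] by (simp add: height_add)
    next
      case False
      have sigma_e: "th e + e \<in> gens" "th e + e \<noteq> 0"
        using e(1) positive_add_ne_0[OF parabolic[OF e(1) False] e(1)] by auto
      have eq: "x - (th e + e) = (x - r - e) + th d"
        by (simp add: th_d)
      have "th (x - (th e + e)) = x - (th e + e)"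
        using fixed th_sigma by (simp add: th_diff)
      then have "x - (th e + e) \<in> nat_span Rp"
        unfolding eq by (rule fixed_add_th_positive_mem[OF e(2) d_Rp])
      then show ?thesis
        using sigma_e by blast
    qed
  qed
qed

lemma max_summand_reduction:
  assumes fixed: "th x = x" and r: "max_summand x r"
  shows "\<exists>g\<in>gens. g \<noteq> 0 \<and> x - g \<in> nat_span Rp"
proof -
  have r_Rp: "r \<in> Rp" and xr: "x - r \<in> nat_span Rp"
    using r by (simp_all add: max_summand_def)
  then have r_cor: "r \<in> coroots"
    using Rp_subset_coroots by blast
  show ?thesis
  proof (cases "th r = r")
    case True
    moreover have "r \<noteq> 0"
      using height_pos[OF r_Rp] height_0 by auto
    ultimately show ?thesis
      using r_Rp xr by blast
  next
    case False
    have le: "form r r \<le> form x r"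
      using max_summand_form_nonneg[OF r] form_commute[of x r] by (simp add: form_diff_right)
    have pos: "0 < form r r"
      using form_coroot_pos r_cor by auto
    have "th r \<noteq> - r"
    proof
      assume "th r = - r"
      then have "form x r = 0"
        by (rule form_fixed_anti[OF fixed])
      then show False
        using le pos by simp
    qed
    then have r': "th r \<in> Rp"
      using parabolic r_Rp by blast
    have "form r (th r) < form r r"
      using form_lt_if_same_length[OF r_cor th_coroot[OF r_cor] not_sym[OF False] form_th] .
    moreover have "form x (th r) = form x r"
      using form_th[of x r] fixed by simp
    ultimately have "0 < form (x - r) (th r)"
      using le by (simp add: form_diff_left)
    then obtain e where "e \<in> Rp" "0 < form e (th r)" "x - r - e \<in> nat_span Rp"
      using nat_span_summand[OF xr, of "\<lambda>v. form v (th r)"] form_add_left by blast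
    then show ?thesis
      using reduction_via_summand[OF fixed r r'] by blast
  qed
qed

lemma fixed_mem_nat_span_gens:
  "th x = x \<Longrightarrow> x \<in> nat_span Rp \<Longrightarrow> x \<in> nat_span gens"
proof (induction "nat (height x)" arbitrary: x rule: less_induct)
  case less
  show ?case
  proof (cases "x = 0")
    case True
    then show ?thesis by (simp add: nat_span.zero)
  next
    case False
    then obtain r where "max_summand x r"
      using max_summand_exists less.prems by blast
    then obtain g where g: "g \<in> gens" "g \<noteq> 0" "x - g \<in> nat_span Rp"
      using max_summand_reduction less.prems by blast
    have "0 < height g"
      using g(1,2) gens_subset_nat_span nat_span_height_pos by blast
    then have "nat (height (x - g)) < nat (height x)"
      using nat_span_height_nonneg[OF g(3)] by (simp add: height_diff)
    moreover have "th (x - g) = x - g"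
      using less.prems(1) th_gens[OF g(1)] by (simp add: th_diff)
    ultimately have "x - g \<in> nat_span gens"
      using less.hyps g(3) by blast
    then have "g + (x - g) \<in> nat_span gens"
      by (rule nat_span.add[OF g(1)])
    then show ?thesis
      by simp
  qed
qed

end

theorem lemma2p1:
  fixes Phi :: "(int^'n) set" and cov th thX :: "int^'n \<Rightarrow> int^'n"
    and Rp :: "(int^'n) set"
  assumes rd: "root_datum Phi cov"
    and pos: "positive_coroots Phi cov Rp"
    and inv: "lattice_involution th"
    and transp: "\<forall>a y. pair (thX a) y = pair a (th y)"
    and roots_stable: "thX ` Phi = Phi"
    and coroots_compat: "\<forall>a\<in>Phi. cov (thX a) = th (cov a)"
    and parabolic: "\<forall>\<alpha>\<in>Rp. th \<alpha> \<noteq> - \<alpha> \<longrightarrow> th \<alpha> \<in> Rp"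
  shows "{l. th l = l} \<inter> nat_span Rp =
         nat_span ({\<alpha>\<in>Rp. th \<alpha> = \<alpha>} \<union> (\<lambda>\<alpha>. th \<alpha> + \<alpha>) ` Rp)"
proof -
  obtain l where "\<forall>a\<in>Phi. pair a l \<noteq> 0" and "Rp = cov ` {a\<in>Phi. pair a l > 0}"
    using pos unfolding positive_coroots_def by blast
  then interpret real_form_datum Phi cov Rp l th thX
    using rd inv transp roots_stable coroots_compat parabolic
    by unfold_locales (auto simp: root_datum_def lattice_involution_def)
  show ?thesis
    using fixed_mem_nat_span_gens nat_span_gens_subset by blast
qed

end
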